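(* For all nonnegative integers $k,l$, \[ \sum_{n=0}^\infty\frac{Q_l(H_{n+1},H_{n+1}^{(2)},\dots,H_{n+1}^{(l)})\,P_k(H_n,H_n^{(2)},\dots,H_n^{(k)})}{(n+1)^2}=\binom{l+k+1}{l}\zeta(l+k+2). \]
   Context: For integers $r\ge1$ and $n\ge0$, $H_n^{(r)}=\sum_{j=1}^n j^{-r}$ (so $H_0^{(r)}=0$) and $H_n=H_n^{(1)}$. $P_0=Q_0=1$ and for $n\ge1$, $P_n(y_1,\dots,y_n)=\sum_{m_1+2m_2+\cdots=n}\frac{(-1)^{m_2+m_4+\cdots}}{m_1!m_2!\cdots}\prod_{i\ge1}(y_i/i)^{m_i}$, $Q_n(y_1,\dots,y_n)=\sum_{m_1+2m_2+\cdots=n}\frac{1}{m_1!m_2!\cdots}\prod_{i\ge1}(y_i/i)^{m_i}$. $\zeta$ is the Riemann zeta function. *)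

theory Defs
  imports Complex_Main
begin

definition gharm :: "nat \<Rightarrow> nat \<Rightarrow> real" where
  "gharm r n = (\<Sum>j=1..n. 1 / (real j) ^ r)"

definition part_mults :: "nat \<Rightarrow> (nat \<Rightarrow> nat) set" where
  "part_mults n = {m. (\<forall>i. m i \<noteq> 0 \<longrightarrow> i \<in> {1..n}) \<and> (\<Sum>i=1..n. i * m i) = n}"

text \<open>P_n(y_1,...,y_n); only y 1, ..., y n are used.\<close>
definition Ppoly :: "nat \<Rightarrow> (nat \<Rightarrow> real) \<Rightarrow> real" where
  "Ppoly n y = (\<Sum>m\<in>part_mults n.
      (-1) ^ (\<Sum>i\<in>{i\<in>{1..n}. even i}. m i) / (\<Prod>i=1..n. fact (m i))
      * (\<Prod>i=1..n. (y i / real i) ^ m i))"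

text \<open>Q_n(y_1,...,y_n); only y 1, ..., y n are used.\<close>
definition Qpoly :: "nat \<Rightarrow> (nat \<Rightarrow> real) \<Rightarrow> real" where
  "Qpoly n y = (\<Sum>m\<in>part_mults n.
      1 / (\<Prod>i=1..n. fact (m i)) * (\<Prod>i=1..n. (y i / real i) ^ m i))"

text \<open>Riemann zeta at integer arguments s >= 2 (series definition).\<close>
definition zeta_nat :: "nat \<Rightarrow> real" where
  "zeta_nat s = (\<Sum>j. 1 / (real (Suc j)) ^ s)"

end

theory Submission
  imports Defs "HOL-Combinatorics.Stirling" "HOL-Analysis.Analysis" "HOL-Real_Asymp.Real_Asymp"
begin

text \<open>By Newton's identities, \<open>P_k\<close> and \<open>Q_l\<close> evaluated at the generalized harmonic numbers
  \<open>H_n^(i)\<close> are the elementary and complete homogeneous symmetric functions \<open>e_k\<close> and \<open>h_l\<close>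
  of \<open>1, 1/2, \<dots>, 1/n\<close>, and \<open>n! e_k(1, \<dots>, 1/n)\<close> is the Stirling number of the first kind
  \<open>[n+1, k+1]\<close>.  Multiplying the summand by \<open>s^l\<close> and summing over \<open>l\<close> first, the generating
  function \<open>\<Sum>_l h_l(1, \<dots>, 1/(n+1)) s^l = (n+1)! / (1-s)_(n+1)\<close> turns the double series into
  \<open>\<Sum>_n [n+1, k+1] / ((n+1) (1-s)_(n+1))\<close>.  Telescoping in \<open>y\<close> with the inverse factorial series
  \<open>1 / y^(j+1) = \<Sum>_n [n, j] / (y)_(n+1)\<close> identifies this with the Hurwitz zeta value
  \<open>\<zeta>(k+2, 1-s)\<close>, whose expansion in powers of \<open>s\<close> has the coefficients
  \<open>binomial(k+l+1, l) \<zeta>(k+l+2)\<close>; comparing coefficients of \<open>s^l\<close> gives the theorem.\<close>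

lemma finite_part_mults: "finite (part_mults n)"
proof -
  have "part_mults n \<subseteq> {f. \<forall>x. (x \<in> {1..n} \<longrightarrow> f x \<in> {0..n}) \<and> (x \<notin> {1..n} \<longrightarrow> f x = 0)}"
  proof safe
    fix m x assume m: "m \<in> part_mults n" and x: "x \<in> {1..n}"
    have "m x \<le> x * m x" using x by simp
    also have "\<dots> \<le> (\<Sum>i=1..n. i * m i)" by (rule member_le_sum) (use x in auto)
    also have "\<dots> = n" using m by (simp add: part_mults_def)
    finally show "m x \<in> {0..n}" by simp
  qed (auto simp: part_mults_def)
  moreover have "finite {f. \<forall>x. (x \<in> {1..n} \<longrightarrow> f x \<in> {0..n}) \<and> (x \<notin> {1..n} \<longrightarrow> f x = (0::nat))}"
    by (rule finite_set_of_finite_funs) auto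
  ultimately show ?thesis by (rule finite_subset)
qed

lemma part_mults_0: "part_mults 0 = {\<lambda>_. 0}"
  by (auto simp: part_mults_def)

lemma sum_weighted_mults_extend:
  fixes m :: "nat \<Rightarrow> nat"
  assumes "\<And>j. m j \<noteq> 0 \<Longrightarrow> j \<in> {1..K}" "K \<le> K'"
  shows "(\<Sum>j=1..K'. j * m j) = (\<Sum>j=1..K. j * m j)"
  by (rule sum.mono_neutral_right) (use assms in fastforce)+

lemma fun_upd_Suc_in_part_mults:
  assumes m: "m \<in> part_mults (k - i)" and i: "i \<in> {1..k}"
  shows "m(i := m i + 1) \<in> part_mults k"
proof -
  have supp: "\<And>j. m j \<noteq> 0 \<Longrightarrow> j \<in> {1..k-i}" using m by (auto simp: part_mults_def)
  have "(\<Sum>j=1..k. j * (m(i := m i + 1)) j) = (\<Sum>j=1..k. j * m j + (if j = i then i else 0))"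
    by (rule sum.cong) auto
  also have "\<dots> = (\<Sum>j=1..k. j * m j) + i" using i by (simp add: sum.distrib)
  also have "(\<Sum>j=1..k. j * m j) = (\<Sum>j=1..k-i. j * m j)"
    by (rule sum_weighted_mults_extend[OF supp]) auto
  also have "\<dots> = k - i" using m by (simp add: part_mults_def)
  finally have "(\<Sum>j=1..k. j * (m(i := m i + 1)) j) = k" using i by simp
  moreover have "j \<in> {1..k}" if "(m(i := m i + 1)) j \<noteq> 0" for j
    using that supp[of j] i by (cases "j = i") auto
  ultimately show ?thesis by (auto simp: part_mults_def)
qed

lemma fun_upd_pred_in_part_mults:
  assumes m: "m \<in> part_mults k" and i: "i \<in> {1..k}" and pos: "m i > 0"
  shows "m(i := m i - 1) \<in> part_mults (k - i)"
proof -
  let ?m = "m(i := m i - 1)"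
  have supp: "\<And>j. m j \<noteq> 0 \<Longrightarrow> j \<in> {1..k}" using m by (auto simp: part_mults_def)
  have "k = (\<Sum>j=1..k. j * m j)" using m by (simp add: part_mults_def)
  also have "\<dots> = (\<Sum>j=1..k. j * ?m j + (if j = i then i else 0))"
    by (rule sum.cong) (use pos in \<open>auto simp: algebra_simps\<close>)
  also have "\<dots> = (\<Sum>j=1..k. j * ?m j) + i" using i by (simp add: sum.distrib)
  finally have s: "(\<Sum>j=1..k. j * ?m j) = k - i" by linarith
  have supp': "j \<in> {1..k-i}" if "?m j \<noteq> 0" for j
  proof -
    have j: "j \<in> {1..k}" using supp[of j] that by (cases "j = i") auto
    have "j \<le> j * ?m j" using that by simp
    also have "\<dots> \<le> (\<Sum>j=1..k. j * ?m j)" by (rule member_le_sum) (use j in auto)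
    finally show ?thesis using s j by simp
  qed
  have "(\<Sum>j=1..k-i. j * ?m j) = (\<Sum>j=1..k. j * ?m j)"
    by (rule sum_weighted_mults_extend[OF supp', symmetric]) auto
  with s supp' show ?thesis by (auto simp: part_mults_def)
qed

definition part_term :: "(nat \<Rightarrow> real) \<Rightarrow> nat \<Rightarrow> (nat \<Rightarrow> nat) \<Rightarrow> real" where
  "part_term w K m = (\<Prod>i=1..K. (w i / real i) ^ m i / fact (m i))"

lemma Qpoly_eq_sum_part_term: "Qpoly k w = (\<Sum>m\<in>part_mults k. part_term w k m)"
  unfolding Qpoly_def part_term_def by (rule sum.cong) (simp_all add: prod_dividef)

lemma part_term_extend:
  assumes "\<And>j. m j \<noteq> 0 \<Longrightarrow> j \<in> {1..K}" "K \<le> K'"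
  shows "part_term w K' m = part_term w K m"
  unfolding part_term_def
proof (rule prod.mono_neutral_right)
  show "\<forall>i\<in>{1..K'} - {1..K}. (w i / real i) ^ m i / fact (m i) = 1"
    using assms(1) by (metis DiffE fact_0 power_0 div_by_1)
qed (use assms(2) in auto)

lemma part_term_fun_upd_Suc:
  assumes "i \<in> {1..K}"
  shows "part_term w K (m(i := m i + 1)) = part_term w K m * (w i / real i) / real (m i + 1)"
proof -
  let ?F = "\<lambda>m j. (w j / real j) ^ m j / fact (m j)"
  have "part_term w K (m(i := m i + 1)) = ?F (m(i := m i + 1)) i * (\<Prod>j\<in>{1..K}-{i}. ?F (m(i := m i + 1)) j)"
    unfolding part_term_def by (rule prod.remove) (use assms in auto)
  also have "(\<Prod>j\<in>{1..K}-{i}. ?F (m(i := m i + 1)) j) = (\<Prod>j\<in>{1..K}-{i}. ?F m j)"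
    by (rule prod.cong) auto
  also have "part_term w K m = ?F m i * (\<Prod>j\<in>{1..K}-{i}. ?F m j)"
    unfolding part_term_def by (rule prod.remove) (use assms in auto)
  moreover have "?F (m(i := m i + 1)) i = ?F m i * (w i / real i) / real (m i + 1)"
    by (simp add: fact_Suc power_Suc divide_simps)
  ultimately show ?thesis by (simp only:) (simp add: divide_simps ac_simps)
qed

text \<open>Removing one part of size \<open>i\<close> maps the multiplicity vectors of \<open>k\<close> with \<open>m i > 0\<close>
  bijectively onto those of \<open>k - i\<close>.\<close>
lemma sum_part_mults_weighted:
  assumes i: "i \<in> {1..k}"
  shows "(\<Sum>m\<in>part_mults k. real (i * m i) * part_term w k m) = w i * Qpoly (k - i) w"
proof -
  have "(\<Sum>m\<in>part_mults k. real (i * m i) * part_term w k m) =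
        (\<Sum>m\<in>{m\<in>part_mults k. m i > 0}. real (i * m i) * part_term w k m)"
    by (rule sum.mono_neutral_right) (auto simp: finite_part_mults)
  also have "\<dots> = (\<Sum>m\<in>part_mults (k-i). real (i * (m i + 1)) * part_term w k (m(i := m i + 1)))"
    by (rule sum.reindex_bij_witness[where i="\<lambda>m. m(i := m i + 1)" and j="\<lambda>m. m(i := m i - 1)"])
       (use i fun_upd_pred_in_part_mults[of _ k i] fun_upd_Suc_in_part_mults[of _ k i] in auto)
  also have "\<dots> = (\<Sum>m\<in>part_mults (k-i). w i * part_term w (k-i) m)"
  proof (rule sum.cong)
    fix m assume "m \<in> part_mults (k - i)"
    then have "part_term w k m = part_term w (k-i) m"
      by (intro part_term_extend) (auto simp: part_mults_def)
    moreover have "real i + real i * real (m i) > 0" using i by (simp add: add_pos_nonneg)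
    ultimately show "real (i * (m i + 1)) * part_term w k (m(i := m i + 1)) = w i * part_term w (k-i) m"
      using i part_term_fun_upd_Suc[OF i, of w m] by (simp add: field_simps)
  qed simp
  finally show ?thesis by (simp add: Qpoly_eq_sum_part_term sum_distrib_left)
qed

lemma Qpoly_newton: "real k * Qpoly k w = (\<Sum>i=1..k. w i * Qpoly (k - i) w)"
proof -
  have "real k * Qpoly k w = (\<Sum>m\<in>part_mults k. (\<Sum>i=1..k. real (i * m i)) * part_term w k m)"
    unfolding Qpoly_eq_sum_part_term sum_distrib_left
  proof (rule sum.cong)
    fix m assume "m \<in> part_mults k"
    then have "(\<Sum>i=1..k. real (i * m i)) = real k"
      unfolding part_mults_def of_nat_sum[symmetric] by simp
    then show "real k * part_term w k m = (\<Sum>i=1..k. real (i * m i)) * part_term w k m" by simp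
  qed simp
  also have "\<dots> = (\<Sum>i=1..k. \<Sum>m\<in>part_mults k. real (i * m i) * part_term w k m)"
    by (simp add: sum_distrib_right sum.swap[of _ "part_mults k"])
  also have "\<dots> = (\<Sum>i=1..k. w i * Qpoly (k - i) w)"
    by (rule sum.cong[OF refl], rule sum_part_mults_weighted)
  finally show ?thesis .
qed

lemma Qpoly_0 [simp]: "Qpoly 0 w = 1"
  by (simp add: Qpoly_def part_mults_0)

lemma Qpoly_newton_Suc:
  "real (Suc k) * Qpoly (Suc k) w = (\<Sum>i\<le>k. w (Suc i) * Qpoly (k - i) w)"
  unfolding Qpoly_newton atLeast0AtMost One_nat_def sum.atLeast_Suc_atMost_Suc_shift by simp

lemma Ppoly_eq_Qpoly: "Ppoly k y = Qpoly k (\<lambda>i. (-1) ^ (i - 1) * y i)"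
  unfolding Ppoly_def Qpoly_def
proof (rule sum.cong)
  fix m
  have "(\<Prod>i=1..k. ((-1::real) ^ (i - 1)) ^ m i) = (\<Prod>i\<in>{i\<in>{1..k}. even i}. (-1) ^ m i)"
    by (subst prod.inter_filter) (auto intro!: prod.cong elim!: evenE oddE)
  also have "\<dots> = (-1) ^ (\<Sum>i\<in>{i\<in>{1..k}. even i}. m i)"
    by (rule power_sum[symmetric])
  finally show "(-1) ^ (\<Sum>i\<in>{i\<in>{1..k}. even i}. m i) / (\<Prod>i=1..k. fact (m i)) * (\<Prod>i=1..k. (y i / real i) ^ m i)
     = 1 / (\<Prod>i=1..k. fact (m i)) * (\<Prod>i=1..k. ((-1) ^ (i - 1) * y i / real i) ^ m i)"
    by (simp add: power_mult_distrib prod.distrib times_divide_eq_right[symmetric] del: times_divide_eq_right)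
qed simp

lemma newton_recurrence_unique:
  fixes c d :: "nat \<Rightarrow> real"
  assumes "c 0 = 1" "d 0 = 1"
    and "\<And>k. real (Suc k) * c (Suc k) = (\<Sum>i\<le>k. w (Suc i) * c (k - i))"
    and "\<And>k. real (Suc k) * d (Suc k) = (\<Sum>i\<le>k. w (Suc i) * d (k - i))"
  shows "c n = d n"
proof (induction n rule: less_induct)
  case (less n)
  show ?case
  proof (cases n)
    case (Suc k)
    have "(\<Sum>i\<le>k. w (Suc i) * c (k - i)) = (\<Sum>i\<le>k. w (Suc i) * d (k - i))"
      by (rule sum.cong) (use less Suc in auto)
    then have "real (Suc k) * c (Suc k) = real (Suc k) * d (Suc k)" using assms(3,4) by simp
    then show ?thesis using Suc by simp
  qed (use assms in simp)
qed

text \<open>\<open>esym x k n\<close>, \<open>hsym x l n\<close> and \<open>psum x i n\<close> are the elementary symmetric function \<open>e_k\<close>,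
  the complete homogeneous symmetric function \<open>h_l\<close> and the power sum \<open>p_i\<close> of \<open>x 1, \<dots>, x n\<close>.\<close>

fun esym :: "(nat \<Rightarrow> real) \<Rightarrow> nat \<Rightarrow> nat \<Rightarrow> real" where
  "esym x 0 n = 1"
| "esym x (Suc k) 0 = 0"
| "esym x (Suc k) (Suc n) = esym x (Suc k) n + x (Suc n) * esym x k n"

fun hsym :: "(nat \<Rightarrow> real) \<Rightarrow> nat \<Rightarrow> nat \<Rightarrow> real" where
  "hsym x 0 n = 1"
| "hsym x (Suc l) 0 = 0"
| "hsym x (Suc l) (Suc n) = hsym x (Suc l) n + x (Suc n) * hsym x l (Suc n)"

definition psum :: "(nat \<Rightarrow> real) \<Rightarrow> nat \<Rightarrow> nat \<Rightarrow> real" where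
  "psum x i n = (\<Sum>j=1..n. x j ^ i)"

lemma psum_0 [simp]: "psum x i 0 = 0"
  by (simp add: psum_def)

lemma psum_Suc: "psum x i (Suc n) = psum x i n + x (Suc n) ^ i"
  by (simp add: psum_def)

lemma esym_Suc_right: "esym x k (Suc n) = esym x k n + (if k = 0 then 0 else x (Suc n) * esym x (k - 1) n)"
  by (cases k) auto

lemma esym_alternating_sum:
  "(\<Sum>i\<le>k. (-1) ^ i * x (Suc n) ^ Suc i * esym x (k - i) (Suc n)) = x (Suc n) * esym x k n"
proof (induction k)
  case (Suc k)
  let ?z = "x (Suc n)"
  have "(\<Sum>i\<le>Suc k. (-1) ^ i * ?z ^ Suc i * esym x (Suc k - i) (Suc n))
      = ?z * esym x (Suc k) (Suc n) + (\<Sum>i\<le>k. (-1) ^ Suc i * ?z ^ Suc (Suc i) * esym x (k - i) (Suc n))"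
    by (simp only: sum.atMost_Suc_shift) simp
  also have "(\<Sum>i\<le>k. (-1) ^ Suc i * ?z ^ Suc (Suc i) * esym x (k - i) (Suc n))
      = - ?z * (\<Sum>i\<le>k. (-1) ^ i * ?z ^ Suc i * esym x (k - i) (Suc n))"
    by (auto simp: sum_distrib_left mult_ac sum_negf[symmetric] intro!: sum.cong)
  finally show ?case using Suc by (simp add: algebra_simps)
qed simp

lemma esym_newton:
  "real (Suc k) * esym x (Suc k) n = (\<Sum>i\<le>k. (-1) ^ i * psum x (Suc i) n * esym x (k - i) n)"
proof (induction n arbitrary: k)
  case (Suc n)
  let ?z = "x (Suc n)"
  have shifted: "(\<Sum>i\<le>k. (-1) ^ i * psum x (Suc i) n * (if k - i = 0 then 0 else ?z * esym x (k - i - 1) n))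
      = ?z * real k * esym x k n"
  proof (cases k)
    case (Suc k')
    have "(\<Sum>i\<le>k. (-1) ^ i * psum x (Suc i) n * (if k - i = 0 then 0 else ?z * esym x (k - i - 1) n))
        = (\<Sum>i\<le>k'. ?z * ((-1) ^ i * psum x (Suc i) n * esym x (k' - i) n))"
      using Suc by (simp add: Suc_diff_le mult_ac)
    also have "\<dots> = ?z * (real (Suc k') * esym x (Suc k') n)"
      using Suc.IH[of k'] by (simp add: sum_distrib_left[symmetric])
    finally show ?thesis using Suc by simp
  qed simp
  have "(\<Sum>i\<le>k. (-1) ^ i * psum x (Suc i) (Suc n) * esym x (k - i) (Suc n))
      = (\<Sum>i\<le>k. (-1) ^ i * psum x (Suc i) n * esym x (k - i) n)
        + (\<Sum>i\<le>k. (-1) ^ i * psum x (Suc i) n * (if k - i = 0 then 0 else ?z * esym x (k - i - 1) n))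
        + (\<Sum>i\<le>k. (-1) ^ i * ?z ^ Suc i * esym x (k - i) (Suc n))"
    by (simp add: psum_Suc esym_Suc_right[of _ "k - _"] sum.distrib[symmetric] algebra_simps
          del: power_Suc)
  also have "\<dots> = real (Suc k) * (esym x (Suc k) n + ?z * esym x k n)"
    using Suc.IH[of k] shifted esym_alternating_sum[of x n k] by (simp add: algebra_simps)
  finally show ?case by simp
qed simp

lemma hsym_newton:
  "real (Suc k) * hsym x (Suc k) n = (\<Sum>i\<le>k. psum x (Suc i) n * hsym x (k - i) n)"
proof (induction n arbitrary: k)
  case (Suc n)
  let ?z = "x (Suc n)"
  have hsym_Suc_right: "hsym x j (Suc n) = hsym x j n + (if j = 0 then 0 else ?z * hsym x (j - 1) (Suc n))" for j
    by (cases j) auto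
  define S where "S k = (\<Sum>i\<le>k. ?z ^ Suc i * hsym x (k - i) (Suc n))" for k
  have S_Suc: "S (Suc k) = ?z * hsym x (Suc k) (Suc n) + ?z * S k" for k
    unfolding S_def by (subst sum.atMost_Suc_shift) (simp add: sum_distrib_left algebra_simps)
  note IH_n = Suc.IH
  show ?case
  proof (induction k)
    case 0 then show ?case using IH_n[of 0] by (simp add: psum_Suc)
  next
    case (Suc k)
    have shifted: "(\<Sum>i\<le>Suc k. psum x (Suc i) n * (if Suc k - i = 0 then 0 else ?z * hsym x (Suc k - i - 1) (Suc n)))
        = ?z * (\<Sum>i\<le>k. psum x (Suc i) n * hsym x (k - i) (Suc n))"
      by (simp add: Suc_diff_le sum_distrib_left algebra_simps)
    have IH_k: "(\<Sum>i\<le>k. psum x (Suc i) n * hsym x (k - i) (Suc n))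
        = real (Suc k) * hsym x (Suc k) (Suc n) - S k"
      using Suc.IH by (simp add: S_def psum_Suc sum.distrib algebra_simps)
    have "(\<Sum>i\<le>Suc k. psum x (Suc i) (Suc n) * hsym x (Suc k - i) (Suc n))
        = (\<Sum>i\<le>Suc k. psum x (Suc i) n * hsym x (Suc k - i) n)
          + (\<Sum>i\<le>Suc k. psum x (Suc i) n * (if Suc k - i = 0 then 0 else ?z * hsym x (Suc k - i - 1) (Suc n)))
          + S (Suc k)"
      by (simp add: psum_Suc hsym_Suc_right[of "Suc k - _"] S_def sum.distrib[symmetric] algebra_simps
          del: power_Suc)
    also have "\<dots> = real (Suc (Suc k)) * (hsym x (Suc (Suc k)) n + ?z * hsym x (Suc k) (Suc n))"
      using IH_n[of "Suc k"] shifted IH_k S_Suc[of k] by (simp add: algebra_simps del: hsym.simps)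
    finally show ?case by simp
  qed
qed simp

lemma Ppoly_psum: "Ppoly k (\<lambda>i. psum x i n) = esym x k n"
  unfolding Ppoly_eq_Qpoly
  by (rule newton_recurrence_unique[where w = "\<lambda>i. (-1) ^ (i - 1) * psum x i n"])
     (simp_all only: Qpoly_0 esym.simps Qpoly_newton_Suc esym_newton diff_Suc_1 mult.assoc)

lemma Qpoly_psum: "Qpoly k (\<lambda>i. psum x i n) = hsym x k n"
  by (rule newton_recurrence_unique[where w = "\<lambda>i. psum x i n"])
     (simp_all only: Qpoly_0 hsym.simps Qpoly_newton_Suc hsym_newton)

lemma of_nat_stirling_eq_esym:
  "real (stirling (Suc n) (Suc k)) = fact n * esym (\<lambda>j. 1 / real j) k n"
proof (induction n arbitrary: k)
  case 0
  then show ?case by (cases k) auto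
next
  case (Suc n)
  show ?case
  proof (cases k)
    case 0
    then show ?thesis by (simp add: stirling_Suc_n_1 algebra_simps del: stirling.simps)
  next
    case (Suc k')
    have "real (stirling (Suc (Suc n)) (Suc k))
          = real (Suc n) * real (stirling (Suc n) (Suc k)) + real (stirling (Suc n) k)"
      by (simp only: stirling.simps(4) of_nat_add of_nat_mult)
    also have "\<dots> = fact (Suc n) * (esym (\<lambda>j. 1 / real j) k n + 1 / real (Suc n) * esym (\<lambda>j. 1 / real j) k' n)"
      using Suc.IH[of k] Suc.IH[of k'] Suc by (simp add: field_simps)
    finally show ?thesis using Suc by simp
  qed
qed

lemma sum_stirling_div_pochhammer_telescope:
  assumes "y > 0"
  shows "y * (\<Sum>n<N. real (stirling n (Suc j)) / pochhammer y (Suc n))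
           = (\<Sum>n<N. real (stirling n j) / pochhammer y (Suc n)) - real (stirling N (Suc j)) / pochhammer y N"
proof (induction N)
  case (Suc N)
  have yN: "y + real N > 0" using assms by simp
  have step: "y * (A + a / q) = (B + b / q) - (real N * a + b) / q"
    if "y * A = B - a / p" "q = p * (y + real N)" "p > 0" for A B a b p q :: real
  proof -
    have "q > 0" and "B = y * A + a * (y + real N) / q" using that yN by simp_all
    then show ?thesis by (simp add: field_simps)
  qed
  have "real (stirling (Suc N) (Suc j)) = real N * real (stirling N (Suc j)) + real (stirling N j)"
    by simp
  then show ?case unfolding sum.lessThan_Suc
    by (simp only:) (rule step[OF Suc.IH pochhammer_Suc pochhammer_pos[OF assms]])
qed simp

lemma not_summable_const_div_shift:
  assumes c: "c > 0" and y: "y > 0"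
  shows "\<not> summable (\<lambda>n. c / (y + real n))"
proof
  assume "summable (\<lambda>n. c / (y + real n))"
  then have "summable (\<lambda>n. (c / (y + 1)) * inverse (real (Suc n)))"
  proof (rule summable_comparison_test[rotated], intro exI[of _ 0] allI impI)
    fix n :: nat
    have "y + real n \<le> (y + 1) * real (Suc n)" using y by (simp add: algebra_simps)
    then have "c / ((y + 1) * real (Suc n)) \<le> c / (y + real n)"
      using c y by (intro divide_left_mono) auto
    then show "norm ((c / (y + 1)) * inverse (real (Suc n))) \<le> c / (y + real n)"
      using c y by (simp add: field_simps)
  qed
  then have "summable (\<lambda>n. inverse (real (Suc n)))" using c y by simp
  then show False using not_summable_harmonic summable_Suc_iff by blast
qed

lemma nonneg_limit_eq_0_if_summable_div_shift:
  fixes a :: "nat \<Rightarrow> real"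
  assumes nonneg: "\<And>n. a n \<ge> 0" and lim: "a \<longlonglongrightarrow> c" and y: "y > 0"
    and sm: "summable (\<lambda>n. a n / (y + real n))"
  shows "c = 0"
proof (rule ccontr)
  assume "c \<noteq> 0"
  moreover have "c \<ge> 0" using nonneg by (intro LIMSEQ_le_const[OF lim]) auto
  ultimately have c: "c / 2 > 0" by simp
  have "eventually (\<lambda>n. c / 2 < a n) sequentially"
    using c by (intro order_tendstoD(1)[OF lim]) simp
  then have "eventually (\<lambda>n. norm (c / 2 / (y + real n)) \<le> a n / (y + real n)) sequentially"
  proof eventually_elim
    case (elim n)
    then have "c / 2 / (y + real n) \<le> a n / (y + real n)" using y by (intro divide_right_mono) auto
    then show ?case using c y by simp
  qed
  then have "summable (\<lambda>n. c / 2 / (y + real n))"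
    by (rule summable_comparison_test_ev[OF _ sm])
  with not_summable_const_div_shift[OF c y] show False by contradiction
qed

text \<open>In the induction step, the telescoping identity shows that the boundary term
  \<open>stirling N (Suc j) / pochhammer y N\<close> converges; its limit must vanish because the
  boundary terms divided by \<open>y + N\<close> form a convergent series.\<close>
lemma stirling_inverse_factorial_series:
  assumes y: "y > 0"
  shows "(\<lambda>n. real (stirling n j) / pochhammer y (Suc n)) sums (1 / y ^ Suc j)"
proof (induction j)
  case 0
  have "(\<lambda>n. real (stirling n 0) / pochhammer y (Suc n)) = (\<lambda>n. if n = 0 then 1 / y else 0)"
    by (rule ext, rename_tac n, case_tac n) auto
  then show ?case using sums_single[of 0 "\<lambda>_. 1 / y"] by simp
next
  case (Suc j)
  define t where "t n = real (stirling n (Suc j)) / pochhammer y (Suc n)" for n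
  define a where "a n = real (stirling n (Suc j)) / pochhammer y n" for n
  define B where "B N = (\<Sum>n<N. real (stirling n j) / pochhammer y (Suc n))" for N
  have t_nonneg: "t n \<ge> 0" and a_nonneg: "a n \<ge> 0" for n
    using y by (simp_all add: t_def a_def pochhammer_pos less_imp_le)
  have telescope: "y * (\<Sum>n<N. t n) = B N - a N" for N
    unfolding t_def a_def B_def by (rule sum_stirling_div_pochhammer_telescope[OF y])
  have B_lim: "B \<longlonglongrightarrow> 1 / y ^ Suc j"
    using Suc.IH by (simp add: B_def[abs_def] sums_def)
  have B_le: "B N \<le> 1 / y ^ Suc j" for N
  proof -
    have "B N \<le> (\<Sum>n. real (stirling n j) / pochhammer y (Suc n))"
      unfolding B_def by (rule sum_le_suminf) (use Suc.IH y in \<open>auto simp: sums_iff pochhammer_pos less_imp_le\<close>)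
    then show ?thesis using Suc.IH by (simp add: sums_iff)
  qed
  have "(\<Sum>n<N. t n) \<le> 1 / y ^ Suc j / y" for N
  proof -
    have "y * (\<Sum>n<N. t n) \<le> 1 / y ^ Suc j"
      using telescope[of N] a_nonneg[of N] B_le[of N] by linarith
    then show ?thesis using y by (simp add: pos_le_divide_eq mult_ac)
  qed
  then have t_sm: "summable t" by (rule summableI_nonneg_bounded[OF t_nonneg])
  have "a = (\<lambda>N. B N - y * (\<Sum>n<N. t n))"
    using telescope by (simp add: fun_eq_iff algebra_simps)
  then have a_lim: "a \<longlonglongrightarrow> 1 / y ^ Suc j - y * suminf t"
    by (simp only:) (intro tendsto_intros B_lim summable_LIMSEQ[OF t_sm])
  have "t = (\<lambda>n. a n / (y + real n))"
    by (simp add: fun_eq_iff t_def a_def pochhammer_Suc)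
  then have "1 / y ^ Suc j - y * suminf t = 0"
    using nonneg_limit_eq_0_if_summable_div_shift[OF a_nonneg a_lim y] t_sm by simp
  then have "suminf t = 1 / y ^ Suc (Suc j)" using y by (simp add: field_simps)
  then show ?case using summable_sums[OF t_sm] by (simp add: t_def[abs_def])
qed

text \<open>Meaningful for \<open>s \<ge> 2\<close> and \<open>y > 0\<close>; otherwise the series may diverge and \<open>suminf\<close> is junk.\<close>
definition hurwitz_zeta :: "nat \<Rightarrow> real \<Rightarrow> real" where
  "hurwitz_zeta s y = (\<Sum>m. 1 / (y + real m) ^ s)"

lemma summable_hurwitz_zeta:
  assumes y: "y > 0" and s: "s \<ge> 2"
  shows "summable (\<lambda>m. 1 / (y + real m) ^ s)"
proof (rule summable_comparison_test_ev[OF _ inverse_power_summable[of 2]])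
  show "eventually (\<lambda>m. norm (1 / (y + real m) ^ s) \<le> inverse (real m ^ 2)) sequentially"
    using eventually_ge_at_top[of 1]
  proof eventually_elim
    case (elim m)
    have "real m ^ 2 \<le> (y + real m) ^ 2" using y by (intro power_mono) auto
    also have "\<dots> \<le> (y + real m) ^ s" using elim y s by (intro power_increasing) auto
    finally show ?case using elim y by (simp add: divide_simps)
  qed
qed simp

lemma hurwitz_zeta_sums:
  "y > 0 \<Longrightarrow> s \<ge> 2 \<Longrightarrow> (\<lambda>m. 1 / (y + real m) ^ s) sums hurwitz_zeta s y"
  unfolding hurwitz_zeta_def by (rule summable_sums[OF summable_hurwitz_zeta])

lemma stirling_div_pochhammer_diff:
  assumes y: "y > 0" and j: "j > 0"
  shows "real (stirling n j) / (real n * pochhammer y n) - real (stirling n j) / (real n * pochhammer (y + 1) n)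
         = real (stirling n j) / pochhammer y (Suc n)"
proof (cases "n = 0")
  case False
  define c r A B Q where "c = real (stirling n j)" and "r = real n" and "A = pochhammer y n"
    and "B = pochhammer (y + 1) n" and "Q = pochhammer y (Suc n)"
  have QA: "Q = A * (y + r)" unfolding Q_def A_def r_def by (rule pochhammer_Suc)
  have QB: "Q = y * B" unfolding Q_def B_def by (rule pochhammer_rec)
  have pos: "r > 0" "A > 0" "B > 0"
    using y False by (simp_all add: r_def A_def B_def pochhammer_pos)
  have "c / (r * A) = c * (y + r) / (r * Q)" using QA pos y by simp
  moreover have "c / (r * B) = c * y / (r * Q)" using QB pos y by simp
  ultimately have "c / (r * A) - c / (r * B) = (c * r) / (r * Q)"
    by (simp add: diff_divide_distrib[symmetric] algebra_simps)
  then show ?thesis using pos by (simp add: c_def r_def A_def B_def Q_def)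
qed (use j in simp)

lemma pochhammer_ge_self:
  assumes "z \<ge> 1" "n > 0"
  shows "pochhammer z n \<ge> (z :: real)"
proof -
  obtain m where n: "n = Suc m" using assms(2) gr0_conv_Suc by blast
  have "1 \<le> pochhammer (z + 1) m"
    unfolding pochhammer_prod using assms(1) by (intro prod_ge_1) simp
  then have "z * 1 \<le> z * pochhammer (z + 1) m" using assms(1) by (intro mult_left_mono) auto
  then show ?thesis by (simp add: n pochhammer_rec)
qed

lemma sum_stirling_div_pochhammer_shift:
  assumes y: "y > 0" and j: "j > 0"
  shows "(\<Sum>n<N. real (stirling n j) / (real n * pochhammer y n))
       = (\<Sum>m<M. \<Sum>n<N. real (stirling n j) / pochhammer (y + real m) (Suc n))
         + (\<Sum>n<N. real (stirling n j) / (real n * pochhammer (y + real M) n))"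
proof (induction M)
  case (Suc M)
  have "(\<Sum>n<N. real (stirling n j) / (real n * pochhammer (y + real M) n))
        - (\<Sum>n<N. real (stirling n j) / (real n * pochhammer (y + real M + 1) n))
      = (\<Sum>n<N. real (stirling n j) / pochhammer (y + real M) (Suc n))"
    unfolding sum_subtractf[symmetric] using y j by (intro sum.cong refl stirling_div_pochhammer_diff) auto
  then show ?case using Suc.IH by (simp add: add_ac)
qed simp

lemma sum_stirling_div_pochhammer_le:
  assumes z: "z \<ge> 1"
  shows "(\<Sum>n<N. real (stirling n j) / (real n * pochhammer z n)) \<le> (\<Sum>n<N. real (stirling n j) / real n) / z"
  unfolding sum_divide_distrib
proof (rule sum_mono)
  fix n
  show "real (stirling n j) / (real n * pochhammer z n) \<le> real (stirling n j) / real n / z"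
  proof (cases "n = 0")
    case False
    then have "real n * z \<le> real n * pochhammer z n"
      using pochhammer_ge_self[OF z] by (intro mult_left_mono) auto
    then show ?thesis using z False by (simp add: divide_left_mono mult_pos_pos flip: divide_divide_eq_left)
  qed simp
qed

lemma sum_stirling_div_pochhammer_le_hurwitz_zeta:
  assumes y: "y > 0" and j: "j > 0"
  shows "(\<Sum>n<N. real (stirling n j) / (real n * pochhammer y n)) \<le> hurwitz_zeta (Suc j) y"
proof -
  define C where "C = (\<Sum>n<N. real (stirling n j) / real n)"
  have bound: "(\<Sum>n<N. real (stirling n j) / (real n * pochhammer y n)) \<le> hurwitz_zeta (Suc j) y + C / (y + real M)"
    if "M \<ge> 1" for M
  proof -
    have "(\<Sum>n<N. real (stirling n j) / pochhammer (y + real m) (Suc n)) \<le> 1 / (y + real m) ^ Suc j" for m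
    proof -
      have ym: "y + real m > 0" using y by simp
      have "(\<Sum>n<N. real (stirling n j) / pochhammer (y + real m) (Suc n))
            \<le> (\<Sum>n. real (stirling n j) / pochhammer (y + real m) (Suc n))"
        using stirling_inverse_factorial_series[OF ym, of j] ym
        by (intro sum_le_suminf) (auto simp: sums_iff pochhammer_pos less_imp_le)
      then show ?thesis using stirling_inverse_factorial_series[OF ym, of j] by (simp add: sums_iff)
    qed
    then have "(\<Sum>m<M. \<Sum>n<N. real (stirling n j) / pochhammer (y + real m) (Suc n))
               \<le> (\<Sum>m<M. 1 / (y + real m) ^ Suc j)"
      by (intro sum_mono)
    also have "\<dots> \<le> hurwitz_zeta (Suc j) y"
      unfolding hurwitz_zeta_def using y j
      by (intro sum_le_suminf summable_hurwitz_zeta) auto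
    finally show ?thesis
      using sum_stirling_div_pochhammer_shift[OF y j, of N M]
            sum_stirling_div_pochhammer_le[of "y + real M" j N] y that
      by (simp add: C_def)
  qed
  have "(\<lambda>M. hurwitz_zeta (Suc j) y + C / (y + real M)) \<longlonglongrightarrow> hurwitz_zeta (Suc j) y + 0"
    by (intro tendsto_add tendsto_const) real_asymp
  then show ?thesis
    by (intro LIMSEQ_le_const exI[of _ 1]) (use bound in auto)
qed

lemma stirling_hurwitz_zeta_series:
  assumes y: "y > 0" and j: "j > 0"
  shows "(\<lambda>n. real (stirling n j) / (real n * pochhammer y n)) sums hurwitz_zeta (Suc j) y"
proof -
  define d where "d n = real (stirling n j) / (real n * pochhammer y n)" for n
  have d_nonneg: "d n \<ge> 0" for n
    using y by (simp add: d_def pochhammer_pos less_imp_le)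
  have sm: "summable d"
    using sum_stirling_div_pochhammer_le_hurwitz_zeta[OF y j]
    by (intro summableI_nonneg_bounded[OF d_nonneg]) (simp add: d_def)
  have "suminf d \<le> hurwitz_zeta (Suc j) y"
    using sum_stirling_div_pochhammer_le_hurwitz_zeta[OF y j]
    by (intro LIMSEQ_le_const2[OF summable_LIMSEQ[OF sm]]) (simp add: d_def)
  moreover have "hurwitz_zeta (Suc j) y \<le> suminf d"
  proof (rule LIMSEQ_le_const2)
    show "(\<lambda>M. \<Sum>m<M. 1 / (y + real m) ^ Suc j) \<longlonglongrightarrow> hurwitz_zeta (Suc j) y"
      using hurwitz_zeta_sums[OF y, of "Suc j"] j by (simp add: sums_def)
    have "(\<Sum>m<M. 1 / (y + real m) ^ Suc j) \<le> suminf d" for M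
    proof (rule LIMSEQ_le_const2)
      show "(\<lambda>N. \<Sum>m<M. \<Sum>n<N. real (stirling n j) / pochhammer (y + real m) (Suc n))
            \<longlonglongrightarrow> (\<Sum>m<M. 1 / (y + real m) ^ Suc j)"
        using y stirling_inverse_factorial_series by (intro tendsto_sum) (simp add: sums_def)
      have "(\<Sum>m<M. \<Sum>n<N. real (stirling n j) / pochhammer (y + real m) (Suc n)) \<le> sum d {..<N}" for N
        using sum_stirling_div_pochhammer_shift[OF y j, of N M] y
        by (simp add: d_def sum_nonneg pochhammer_pos less_imp_le)
      also have "sum d {..<N} \<le> suminf d" for N
        using sm d_nonneg by (intro sum_le_suminf) auto
      finally show "\<exists>N. \<forall>n\<ge>N. (\<Sum>m<M. \<Sum>n<n. real (stirling n j) / pochhammer (y + real m) (Suc n)) \<le> suminf d"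
        by blast
    qed
    then show "\<exists>N. \<forall>M\<ge>N. (\<Sum>m<M. 1 / (y + real m) ^ Suc j) \<le> suminf d" by blast
  qed
  ultimately show ?thesis using summable_sums[OF sm] by (simp add: d_def[abs_def])
qed

lemma esym_nonneg: "(\<And>j. x j \<ge> 0) \<Longrightarrow> esym x k n \<ge> 0"
  by (induction x k n rule: esym.induct) auto

lemma hsym_nonneg: "(\<And>j. x j \<ge> 0) \<Longrightarrow> hsym x l n \<ge> 0"
  by (induction x l n rule: hsym.induct) auto

lemma hsym_Suc_eq_sum: "hsym x l (Suc n) = (\<Sum>i\<le>l. hsym x i n * x (Suc n) ^ (l - i))"
proof (induction l)
  case (Suc l)
  have "x (Suc n) * hsym x l (Suc n) = (\<Sum>i\<le>l. hsym x i n * x (Suc n) ^ (Suc l - i))"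
    unfolding Suc by (simp add: sum_distrib_left Suc_diff_le mult_ac)
  then show ?case by simp
qed simp

lemma hsym_generating_function:
  assumes x: "\<And>j. x j \<ge> 0" and s: "s \<ge> 0" and xs: "\<And>j. j \<in> {1..n} \<Longrightarrow> x j * s < 1"
  shows "(\<lambda>l. hsym x l n * s ^ l) sums (\<Prod>j=1..n. 1 / (1 - x j * s))"
  using xs
proof (induction n)
  case 0
  have "(\<lambda>l. hsym x l 0 * s ^ l) = (\<lambda>l. if l = 0 then 1 else 0)"
    by (rule ext, rename_tac l, case_tac l) auto
  then show ?case using sums_single[of 0 "\<lambda>_. 1::real"] by simp
next
  case (Suc n)
  define z where "z = x (Suc n) * s"
  have z: "0 \<le> z" "z < 1" using x s Suc.prems[of "Suc n"] by (auto simp: z_def)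
  have IH: "(\<lambda>l. hsym x l n * s ^ l) sums (\<Prod>j=1..n. 1 / (1 - x j * s))"
    using Suc by simp
  have geom: "(\<lambda>l. z ^ l) sums (1 / (1 - z))" using geometric_sums[of z] z by simp
  have "(\<lambda>l. \<Sum>i\<le>l. (hsym x i n * s ^ i) * z ^ (l - i)) sums
        ((\<Sum>l. hsym x l n * s ^ l) * (\<Sum>l. z ^ l))"
    using IH geom x s z by (intro Cauchy_product_sums) (auto simp: sums_iff hsym_nonneg)
  moreover have "(\<Sum>i\<le>l. (hsym x i n * s ^ i) * z ^ (l - i)) = hsym x l (Suc n) * s ^ l" for l
    unfolding hsym_Suc_eq_sum sum_distrib_right
    by (intro sum.cong refl) (simp add: z_def power_mult_distrib mult_ac flip: power_add)
  ultimately show ?case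
    using IH geom by (simp add: sums_iff z_def)
qed

lemma prod_inverse_one_minus_div_eq:
  assumes "s < 1"
  shows "(\<Prod>j=1..n. 1 / (1 - 1 / real j * s)) = fact n / pochhammer (1 - s) n"
proof (induction n)
  case (Suc n)
  have "1 - s + real n > 0" using assms by simp
  then have last: "1 / (1 - 1 / real (Suc n) * s) = real (Suc n) / (1 - s + real n)"
    by (simp add: field_simps)
  have "(\<Prod>j=1..Suc n. 1 / (1 - 1 / real j * s))
        = 1 / (1 - 1 / real (Suc n) * s) * (\<Prod>j=1..n. 1 / (1 - 1 / real j * s))"
    by (rule prod.nat_ivl_Suc') simp
  also have "\<dots> = real (Suc n) / (1 - s + real n) * (fact n / pochhammer (1 - s) n)"
    by (simp only: last Suc.IH)
  also have "\<dots> = fact (Suc n) / pochhammer (1 - s) (Suc n)"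
    by (simp add: pochhammer_Suc fact_Suc)
  finally show ?case .
qed simp

lemma harmonic_esym_hsym_row_sums:
  assumes s: "0 \<le> s" "s < 1"
  shows "(\<lambda>l. esym (\<lambda>j. 1 / real j) k n * hsym (\<lambda>j. 1 / real j) l (Suc n) / (real (Suc n))\<^sup>2 * s ^ l)
           sums (real (stirling (Suc n) (Suc k)) / (real (Suc n) * pochhammer (1 - s) (Suc n)))"
proof -
  let ?e = "esym (\<lambda>j. 1 / real j) k n"
  have "1 / real j * s < 1" if "j \<in> {1..Suc n}" for j
  proof -
    have j: "real j \<ge> 1" using that by simp
    have "1 / real j \<le> 1" using j by simp
    then have "1 / real j * s \<le> 1 * s" using s(1) by (rule mult_right_mono)
    then show ?thesis using s by simp
  qed
  then have "(\<lambda>l. hsym (\<lambda>j. 1 / real j) l (Suc n) * s ^ l) sums (fact (Suc n) / pochhammer (1 - s) (Suc n))"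
    using hsym_generating_function[of "\<lambda>j. 1 / real j" s "Suc n"] s
    unfolding prod_inverse_one_minus_div_eq[OF s(2)] by simp
  then have "(\<lambda>l. ?e / (real (Suc n))\<^sup>2 * (hsym (\<lambda>j. 1 / real j) l (Suc n) * s ^ l))
               sums (?e / (real (Suc n))\<^sup>2 * (fact (Suc n) / pochhammer (1 - s) (Suc n)))"
    by (rule sums_mult)
  moreover have "?e / (real (Suc n))\<^sup>2 * (fact (Suc n) / pochhammer (1 - s) (Suc n))
      = real (stirling (Suc n) (Suc k)) / (real (Suc n) * pochhammer (1 - s) (Suc n))"
    unfolding of_nat_stirling_eq_esym fact_Suc by (simp add: power2_eq_square)
  ultimately show ?thesis by (simp add: mult_ac)
qed

lemma negative_binomial_series:
  assumes z: "0 \<le> z" "z < (1::real)"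
  shows "(\<lambda>l. real ((p + l) choose l) * z ^ l) sums (1 / (1 - z) ^ Suc p)"
proof (induction p)
  case 0
  show ?case using geometric_sums[of z] z by simp
next
  case (Suc p)
  have geom: "(\<lambda>l. z ^ l) sums (1 / (1 - z))" using geometric_sums[of z] z by simp
  have "(\<lambda>l. \<Sum>i\<le>l. (real ((p + i) choose i) * z ^ i) * z ^ (l - i)) sums
        ((\<Sum>l. real ((p + l) choose l) * z ^ l) * (\<Sum>l. z ^ l))"
    using Suc geom z by (intro Cauchy_product_sums) (auto simp: sums_iff)
  moreover have "(\<Sum>i\<le>l. (real ((p + i) choose i) * z ^ i) * z ^ (l - i)) = real ((Suc p + l) choose l) * z ^ l" for l
  proof -
    have "(\<Sum>i\<le>l. (real ((p + i) choose i) * z ^ i) * z ^ (l - i)) = (\<Sum>i\<le>l. real ((p + i) choose i)) * z ^ l"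
      by (simp add: sum_distrib_right mult.assoc power_add[symmetric])
    also have "(\<Sum>i\<le>l. real ((p + i) choose i)) = real (Suc (p + l) choose l)"
      by (subst sum_choose_lower[symmetric]) simp
    finally show ?thesis by simp
  qed
  ultimately show ?case using Suc geom by (simp add: sums_iff)
qed

lemma sums_swap_nonneg:
  fixes f :: "nat \<Rightarrow> nat \<Rightarrow> real"
  assumes nonneg: "\<And>n l. f n l \<ge> 0"
    and rows: "\<And>n. (\<lambda>l. f n l) sums g n"
    and total: "g sums S"
  shows "(\<lambda>l. \<Sum>n. f n l) sums S" and "\<And>l. summable (\<lambda>n. f n l)"
proof -
  define F where "F = (\<lambda>(n, l). f n l)"
  have g_nonneg: "g n \<ge> 0" for n
    using rows[of n] nonneg suminf_nonneg[of "f n"] by (simp add: sums_iff)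
  have rows': "((\<lambda>l. F (n, l)) has_sum g n) UNIV" for n
    unfolding F_def using sums_nonneg_imp_has_sum[OF rows[of n]] nonneg by simp
  have total': "(g has_sum S) UNIV" using total g_nonneg by (rule sums_nonneg_imp_has_sum)
  have "F summable_on UNIV \<times> UNIV"
    using rows' has_sum_imp_summable[OF total'] by (rule summable_on_SigmaI) (simp add: F_def nonneg)
  then have "(F has_sum S) (UNIV \<times> UNIV)"
    using rows' total' by (intro has_sum_SigmaI)
  then have swapped: "((\<lambda>(l, n). f n l) has_sum S) (UNIV \<times> UNIV)"
    unfolding F_def by (subst (asm) has_sum_swap) (simp add: case_prod_unfold)
  have cols: "summable (\<lambda>n. f n l)" for l
  proof -
    have "(\<lambda>(l, n). f n l) summable_on Sigma UNIV (\<lambda>_. UNIV)"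
      using swapped unfolding summable_on_def by blast
    from summable_on_SigmaD1[OF this] have "(\<lambda>n. f n l) summable_on UNIV" by simp
    then show ?thesis using summable_on_UNIV_nonneg_real_iff[of "\<lambda>n. f n l"] nonneg by blast
  qed
  have "((\<lambda>l. \<Sum>n. f n l) has_sum S) UNIV"
  proof (rule has_sum_SigmaD[OF swapped])
    show "((\<lambda>n. (\<lambda>(l, n). f n l) (l, n)) has_sum (\<Sum>n. f n l)) UNIV" for l
      using sums_nonneg_imp_has_sum[OF summable_sums[OF cols[of l]]] nonneg by simp
  qed
  then show "(\<lambda>l. \<Sum>n. f n l) sums S" by (rule has_sum_imp_sums)
  show "summable (\<lambda>n. f n l)" for l by (rule cols)
qed

lemma hurwitz_zeta_power_series:
  assumes s: "0 < s" "s < 1"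
  shows "(\<lambda>l. real ((k + 1 + l) choose l) * zeta_nat (l + k + 2) * s ^ l) sums hurwitz_zeta (k + 2) (1 - s)"
proof -
  define f where "f m l = real ((k + 1 + l) choose l) * s ^ l / real (Suc m) ^ (l + k + 2)" for m l
  have rows: "(\<lambda>l. f m l) sums (1 / (1 - s + real m) ^ (k + 2))" for m
  proof -
    define z where "z = s / real (Suc m)"
    have z: "0 \<le> z" "z < 1" using s by (auto simp: z_def field_simps)
    have "(\<lambda>l. (1 / real (Suc m) ^ (k + 2)) * (real ((k + 1 + l) choose l) * z ^ l)) sums
          ((1 / real (Suc m) ^ (k + 2)) * (1 / (1 - z) ^ Suc (k + 1)))"
      by (rule sums_mult[OF negative_binomial_series[OF z]])
    moreover have "real (Suc m) * (1 - z) = 1 - s + real m" by (simp add: z_def field_simps)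
    then have "(1 / real (Suc m) ^ (k + 2)) * (1 / (1 - z) ^ Suc (k + 1)) = 1 / (1 - s + real m) ^ (k + 2)"
      by (simp add: power_mult_distrib[symmetric] field_simps)
    moreover have "(1 / real (Suc m) ^ (k + 2)) * (real ((k + 1 + l) choose l) * z ^ l) = f m l" for l
      by (simp add: f_def z_def power_divide power_add field_simps)
    ultimately show ?thesis by simp
  qed
  have "(\<lambda>l. \<Sum>m. f m l) sums hurwitz_zeta (k + 2) (1 - s)"
    using rows hurwitz_zeta_sums[of "1 - s" "k + 2"] s
    by (intro sums_swap_nonneg(1)[where g = "\<lambda>m. 1 / (1 - s + real m) ^ (k + 2)"]) (auto simp: f_def)
  moreover have "(\<Sum>m. f m l) = real ((k + 1 + l) choose l) * zeta_nat (l + k + 2) * s ^ l" for l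
  proof -
    have "summable (\<lambda>m. 1 / real (Suc m) ^ (l + k + 2))"
      using summable_hurwitz_zeta[of 1 "l + k + 2"] by (simp add: add_ac)
    then have "(\<Sum>m. (real ((k + 1 + l) choose l) * s ^ l) * (1 / real (Suc m) ^ (l + k + 2)))
          = (real ((k + 1 + l) choose l) * s ^ l) * zeta_nat (l + k + 2)"
      unfolding zeta_nat_def by (rule suminf_mult)
    then show ?thesis by (simp add: f_def mult_ac)
  qed
  ultimately show ?thesis by simp
qed

lemma powser_coeffs_eq_0:
  fixes a :: "nat \<Rightarrow> real"
  assumes d: "d > 0" and vanish: "\<And>s. 0 < s \<Longrightarrow> s < d \<Longrightarrow> (\<lambda>l. a l * s ^ l) sums 0"
  shows "a j = 0"
proof (induction j rule: less_induct)
  case (less j)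
  have tail: "(\<lambda>l. a (l + j) * s ^ l) sums 0" if s: "0 < s" "s < d" for s
  proof -
    have "(\<lambda>l. a l * s ^ l) sums (0 + (\<Sum>i<j. a i * s ^ i))" using vanish[OF s] less by simp
    then have "(\<lambda>l. a (l + j) * s ^ (l + j)) sums 0" by (subst sums_iff_shift)
    then have "(\<lambda>l. a (l + j) * s ^ (l + j) / s ^ j) sums (0 / s ^ j)" by (rule sums_divide)
    then show ?thesis using s by (simp add: power_add)
  qed
  define g where "g x = (\<Sum>l. a (l + j) * x ^ l)" for x :: real
  have "isCont g 0"
    unfolding g_def[abs_def]
    by (rule isCont_powser[of _ "d / 2"]) (use tail[of "d / 2"] d in \<open>auto simp: sums_iff\<close>)
  then have "(g \<longlongrightarrow> g 0) (at_right 0)"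
    by (simp add: isCont_def filterlim_at_split)
  moreover have "eventually (\<lambda>x. g x = 0) (at_right 0)"
    using eventually_at_right_real[OF d] by eventually_elim (use tail in \<open>auto simp: g_def sums_iff\<close>)
  ultimately have "g 0 = 0"
    by (metis tendsto_unique tendsto_eventually trivial_limit_at_right_real)
  then show ?case unfolding g_def using powser_zero[of "\<lambda>l. a (l + j)"] by simp
qed

lemma harmonic_esym_hsym_generating_function:
  assumes s: "0 < s" "s < 1"
  shows "\<And>l. summable (\<lambda>n. esym (\<lambda>j. 1 / real j) k n * hsym (\<lambda>j. 1 / real j) l (Suc n) / (real (Suc n))\<^sup>2)"
    and "(\<lambda>l. (\<Sum>n. esym (\<lambda>j. 1 / real j) k n * hsym (\<lambda>j. 1 / real j) l (Suc n) / (real (Suc n))\<^sup>2) * s ^ l)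
           sums hurwitz_zeta (k + 2) (1 - s)"
proof -
  define f where "f n l = esym (\<lambda>j. 1 / real j) k n * hsym (\<lambda>j. 1 / real j) l (Suc n) / (real (Suc n))\<^sup>2 * s ^ l"
    for n l
  have nonneg: "f n l \<ge> 0" for n l
  proof -
    have "esym (\<lambda>j. 1 / real j) k n \<ge> 0" "hsym (\<lambda>j. 1 / real j) l (Suc n) \<ge> 0"
      by (rule esym_nonneg hsym_nonneg, simp)+
    then show ?thesis using s by (simp add: f_def)
  qed
  have rows: "(\<lambda>l. f n l) sums (real (stirling (Suc n) (Suc k)) / (real (Suc n) * pochhammer (1 - s) (Suc n)))" for n
    unfolding f_def using s by (intro harmonic_esym_hsym_row_sums[where s = s and k = k and n = n]) auto
  have "(\<lambda>n. real (stirling n (Suc k)) / (real n * pochhammer (1 - s) n)) sums hurwitz_zeta (Suc (Suc k)) (1 - s)"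
    using stirling_hurwitz_zeta_series[of "1 - s" "Suc k"] s by simp
  then have total: "(\<lambda>n. real (stirling (Suc n) (Suc k)) / (real (Suc n) * pochhammer (1 - s) (Suc n)))
                      sums hurwitz_zeta (k + 2) (1 - s)"
    \<comment> \<open>the term \<open>n = 0\<close> is \<open>x / 0 = 0\<close>\<close>
    by (subst sums_Suc_iff) (simp add: numeral_2_eq_2)
  show summable: "summable (\<lambda>n. esym (\<lambda>j. 1 / real j) k n * hsym (\<lambda>j. 1 / real j) l (Suc n) / (real (Suc n))\<^sup>2)" for l
  proof -
    have "summable (\<lambda>n. s ^ l * (esym (\<lambda>j. 1 / real j) k n * hsym (\<lambda>j. 1 / real j) l (Suc n) / (real (Suc n))\<^sup>2))"
      using sums_swap_nonneg(2)[OF nonneg rows total, of l] by (simp add: f_def mult_ac)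
    then show ?thesis by (rule summable_mult_D) (use s in simp)
  qed
  have "(\<Sum>n. f n l) = (\<Sum>n. esym (\<lambda>j. 1 / real j) k n * hsym (\<lambda>j. 1 / real j) l (Suc n) / (real (Suc n))\<^sup>2) * s ^ l" for l
    unfolding f_def by (rule suminf_mult2[OF summable, symmetric])
  then show "(\<lambda>l. (\<Sum>n. esym (\<lambda>j. 1 / real j) k n * hsym (\<lambda>j. 1 / real j) l (Suc n) / (real (Suc n))\<^sup>2) * s ^ l)
               sums hurwitz_zeta (k + 2) (1 - s)"
    using sums_swap_nonneg(1)[OF nonneg rows total] by simp
qed

text \<open>Both sides are the coefficients of power series in \<open>s\<close> with the sum \<open>hurwitz_zeta (k + 2) (1 - s)\<close>.\<close>
lemma harmonic_esym_hsym_series: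
  "(\<lambda>n. esym (\<lambda>j. 1 / real j) k n * hsym (\<lambda>j. 1 / real j) l (Suc n) / (real (Suc n))\<^sup>2)
     sums (real ((k + 1 + l) choose l) * zeta_nat (l + k + 2))"
proof -
  define T where "T l = (\<Sum>n. esym (\<lambda>j. 1 / real j) k n * hsym (\<lambda>j. 1 / real j) l (Suc n) / (real (Suc n))\<^sup>2)" for l
  define C where "C l = real ((k + 1 + l) choose l) * zeta_nat (l + k + 2)" for l
  have "T j - C j = 0" for j
  proof (rule powser_coeffs_eq_0[of 1 "\<lambda>l. T l - C l"])
    fix s :: real assume s: "0 < s" "s < 1"
    show "(\<lambda>l. (T l - C l) * s ^ l) sums 0"
      using sums_diff[OF harmonic_esym_hsym_generating_function(2)[OF s, of k, folded T_def]
                         hurwitz_zeta_power_series[OF s, of k, folded C_def]]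
      by (simp add: algebra_simps)
  qed simp
  then show ?thesis
    using summable_sums[OF harmonic_esym_hsym_generating_function(1)[of "1/2" k l]] by (simp add: T_def C_def)
qed

lemma gharm_eq_psum: "gharm i n = psum (\<lambda>j. 1 / real j) i n"
  by (simp add: gharm_def psum_def power_one_over)

theorem theorem4:
  fixes k l :: nat
  shows "(\<lambda>n. Qpoly l (\<lambda>i. gharm i (n + 1)) * Ppoly k (\<lambda>i. gharm i n) / (real (n + 1))\<^sup>2)
           sums (real ((l + k + 1) choose l) * zeta_nat (l + k + 2))"
  using harmonic_esym_hsym_series[of k l]
  by (simp add: gharm_eq_psum Qpoly_psum Ppoly_psum mult_ac add_ac)

end
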